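(* For any $a,b,\alpha,\beta$ and any natural number $n\ge1$, \[ \Psi\left(\begin{array}{cc|c} a & b & n \\ \alpha & \beta & \lfloor n/2\rfloor \end{array}\right)=(-1)^{\lfloor n/2\rfloor}\Psi(\alpha,\beta,n),\qquad \Phi\left(\begin{array}{cc|c} a & b & n \\ \alpha & \beta & \lfloor (n-1)/2\rfloor \end{array}\right)=(-1)^{\lfloor (n-1)/2\rfloor}\Phi(\alpha,\beta,n). \]
   Context: $\delta(m)=1$ for $m$ odd, $0$ for $m$ even; $\lfloor\cdot\rfloor$ is the floor. $\Psi(a,b,n)$, $\Phi(a,b,n)$ are defined by $\Psi(a,b,0)=2$, $\Psi(a,b,1)=1$, $\Psi(a,b,n+1)=(2a-b)^{\delta(n)}\Psi(a,b,n)-a\Psi(a,b,n-1)$ and $\Phi(a,b,0)=0$, $\Phi(a,b,1)=1$, $\Phi(a,b,n+1)=(2a-b)^{\delta(n+1)}\Phi(a,b,n)-a\Phi(a,b,n-1)$. For indeterminates $a,b,\alpha,\beta$ and $n\ge1$, $\Psi\left(\begin{array}{cc|c} a & b & n \\ \alpha & \beta & r \end{array}\right)$ ($0\le r\le\lfloor n/2\rfloor$) and $\Phi\left(\begin{array}{cc|c} a & b & n \\ \alpha & \beta & r \end{array}\right)$ ($0\le r\le\lfloor (n-1)/2\rfloor$) are the unique polynomials in $\mathbb{Z}[a,b,\alpha,\beta]$ such that, identically in $x,y$, $(\beta a-\alpha b)^{\lfloor n/2\rfloor}\frac{x^n+y^n}{(x+y)^{\delta(n)}}=\sum_{r}\Psi\left(\begin{array}{cc|c}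 a & b & n \\ \alpha & \beta & r \end{array}\right)(\alpha x^2+\beta xy+\alpha y^2)^{\lfloor n/2\rfloor-r}(ax^2+bxy+ay^2)^r$ and $(\beta a-\alpha b)^{\lfloor (n-1)/2\rfloor}\frac{x^n-y^n}{(x-y)(x+y)^{\delta(n-1)}}=\sum_{r}\Phi\left(\begin{array}{cc|c} a & b & n \\ \alpha & \beta & r \end{array}\right)(\alpha x^2+\beta xy+\alpha y^2)^{\lfloor (n-1)/2\rfloor-r}(ax^2+bxy+ay^2)^r$. For numerical values of $a,b,\alpha,\beta$ they are evaluated. *)

theory Defs
  imports "HOL-Computational_Algebra.Polynomial"
begin

definition delta :: "nat \<Rightarrow> nat" where
  "delta m = (if odd m then 1 else 0)"

fun Psi :: "'a::comm_ring_1 \<Rightarrow> 'a \<Rightarrow> nat \<Rightarrow> 'a" where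
  "Psi a b 0 = 2"
| "Psi a b (Suc 0) = 1"
| "Psi a b (Suc (Suc n)) =
     (2*a - b) ^ delta (Suc n) * Psi a b (Suc n) - a * Psi a b n"

fun Phi :: "'a::comm_ring_1 \<Rightarrow> 'a \<Rightarrow> nat \<Rightarrow> 'a" where
  "Phi a b 0 = 0"
| "Phi a b (Suc 0) = 1"
| "Phi a b (Suc (Suc n)) =
     (2*a - b) ^ delta (Suc (Suc n)) * Phi a b (Suc n) - a * Phi a b n"

text \<open>The polynomial ring Z[a,b,alpha,beta], realised as nested univariate
  polynomials, and its four indeterminates.\<close>
type_synonym R4 = "int poly poly poly poly"

definition Xa :: R4 where "Xa = [:[:[:[:0, 1:]:]:]:]"
definition Xb :: R4 where "Xb = [:[:[:0, 1:]:]:]"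
definition Xalpha :: R4 where "Xalpha = [:[:0, 1:]:]"
definition Xbeta :: R4 where "Xbeta = [:0, 1:]"

text \<open>They are the unique coefficient families (indexed by r, zero outside the
  admissible range) satisfying the defining identity identically in x, y.
  The division by (x+y)^delta(n) (resp. (x-y)(x+y)^delta(n-1)) is cleared by
  multiplying both sides, which is equivalent over an integral domain.\<close>
definition Psi_coef :: "'a::comm_ring_1 \<Rightarrow> 'a \<Rightarrow> 'a \<Rightarrow> 'a \<Rightarrow> nat \<Rightarrow> nat \<Rightarrow> 'a" where
  "Psi_coef a b \<alpha> \<beta> n = (THE c. (\<forall>r. n div 2 < r \<longrightarrow> c r = 0) \<and>
     (\<forall>x y. (\<beta>*a - \<alpha>*b) ^ (n div 2) * (x^n + y^n) =
        (x + y) ^ delta n *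
        (\<Sum>r\<le>n div 2. c r * (\<alpha>*x^2 + \<beta>*x*y + \<alpha>*y^2) ^ (n div 2 - r)
                           * (a*x^2 + b*x*y + a*y^2) ^ r)))"

definition Phi_coef :: "'a::comm_ring_1 \<Rightarrow> 'a \<Rightarrow> 'a \<Rightarrow> 'a \<Rightarrow> nat \<Rightarrow> nat \<Rightarrow> 'a" where
  "Phi_coef a b \<alpha> \<beta> n = (THE c. (\<forall>r. (n - 1) div 2 < r \<longrightarrow> c r = 0) \<and>
     (\<forall>x y. (\<beta>*a - \<alpha>*b) ^ ((n - 1) div 2) * (x^n - y^n) =
        (x - y) * (x + y) ^ delta (n - 1) *
        (\<Sum>r\<le>(n - 1) div 2. c r * (\<alpha>*x^2 + \<beta>*x*y + \<alpha>*y^2) ^ ((n - 1) div 2 - r)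
                           * (a*x^2 + b*x*y + a*y^2) ^ r)))"

end

theory Submission
  imports Defs
begin

(* Put A = \<alpha>x\<^sup>2 + \<beta>xy + \<alpha>y\<^sup>2, B = ax\<^sup>2 + bxy + ay\<^sup>2 and D = \<beta>a - \<alpha>b.  Then
   D(x\<^sup>2 + y\<^sup>2) = \<beta>B - bA and D xy = aA - \<alpha>B.  The power sums T_k = x^(2k+e) \<plusminus> y^(2k+e)
   satisfy T_(k+2) = (x\<^sup>2 + y\<^sup>2) T_(k+1) - (xy)\<^sup>2 T_k, hence D^k T_k is the cleared
   denominator F(x,y) times a binary form of degree k in A, B whose coefficient polynomial
   G_k(t) (t^r standing for A^(k-r) B^r) obeys G_(k+2) = (\<beta>t - b) G_(k+1) - (a - \<alpha>t)\<^sup>2 G_k.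
   Its leading coefficient therefore satisfies X_(k+2) = \<beta> X_(k+1) - \<alpha>\<^sup>2 X_k, which up to
   the sign (-1)^k is the two-step recurrence of Psi(\<alpha>,\<beta>,_) and Phi(\<alpha>,\<beta>,_).  The
   coefficients are unique because A and B are coprime: U A + V B = D\<^sup>2 for suitable
   quadratics U, V, and D \<noteq> 0, \<alpha> \<noteq> 0. *)

definition homogenize :: "nat \<Rightarrow> 'a::comm_ring_1 poly \<Rightarrow> 'a \<Rightarrow> 'a \<Rightarrow> 'a" where
  "homogenize k G A B = (\<Sum>r\<le>k. coeff G r * A^(k - r) * B^r)"

lemma homogenize_add: "homogenize k (G + H) A B = homogenize k G A B + homogenize k H A B"
  by (simp add: homogenize_def algebra_simps sum.distrib)

lemma homogenize_diff: "homogenize k (G - H) A B = homogenize k G A B - homogenize k H A B"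
  by (simp add: homogenize_def algebra_simps sum_subtractf)

lemma homogenize_smult: "homogenize k (smult u G) A B = u * homogenize k G A B"
  by (simp add: homogenize_def sum_distrib_left algebra_simps)

lemma homogenize_pCons_0: "homogenize (Suc k) (pCons 0 G) A B = B * homogenize k G A B"
  unfolding homogenize_def
  by (subst sum.atMost_Suc_shift) (simp add: sum_distrib_left algebra_simps)

lemma homogenize_Suc:
  assumes "degree G \<le> k"
  shows "homogenize (Suc k) G A B = A * homogenize k G A B"
proof -
  have "coeff G (Suc k) = 0"
    using assms by (simp add: coeff_eq_0)
  then have "homogenize (Suc k) G A B = (\<Sum>r\<le>k. A * (coeff G r * A^(k - r) * B^r))"
    unfolding homogenize_def by (auto simp: Suc_diff_le intro!: sum.cong)
  then show ?thesis
    by (simp add: homogenize_def sum_distrib_left)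
qed

lemma homogenize_linear_mult:
  assumes "degree G \<le> k"
  shows "homogenize (Suc k) ([:l, u:] * G) A B = (l * A + u * B) * homogenize k G A B"
  using assms
  by (simp add: homogenize_add homogenize_Suc homogenize_pCons_0 homogenize_smult algebra_simps)

fun AB_poly :: "'a::comm_ring_1 \<Rightarrow> 'a \<Rightarrow> 'a \<Rightarrow> 'a \<Rightarrow> 'a \<Rightarrow> 'a poly \<Rightarrow> nat \<Rightarrow> 'a poly" where
  "AB_poly a b \<alpha> \<beta> g0 G1 0 = [:g0:]"
| "AB_poly a b \<alpha> \<beta> g0 G1 (Suc 0) = G1"
| "AB_poly a b \<alpha> \<beta> g0 G1 (Suc (Suc k)) =
     [:-b, \<beta>:] * AB_poly a b \<alpha> \<beta> g0 G1 (Suc k)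
     - [:a, -\<alpha>:] * ([:a, -\<alpha>:] * AB_poly a b \<alpha> \<beta> g0 G1 k)"

lemma degree_linear_mult_le: "degree ([:l, u:] * p) \<le> Suc (degree p)"
  by (rule order_trans[OF degree_mult_le]) simp

lemma degree_AB_poly:
  assumes "degree G1 \<le> 1"
  shows "degree (AB_poly a b \<alpha> \<beta> g0 G1 k) \<le> k"
proof (induction k rule: induct_nat_012)
  case (ge2 k)
  let ?G = "AB_poly a b \<alpha> \<beta> g0 G1"
  have "degree ([:-b, \<beta>:] * ?G (Suc k)) \<le> Suc (Suc k)"
    using degree_linear_mult_le[of "-b" \<beta> "?G (Suc k)"] ge2.IH(2) by linarith
  moreover have "degree ([:a, -\<alpha>:] * ([:a, -\<alpha>:] * ?G k)) \<le> Suc (Suc k)"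
    using degree_linear_mult_le[of a "-\<alpha>" "?G k"] ge2.IH(1)
      degree_linear_mult_le[of a "-\<alpha>" "[:a, -\<alpha>:] * ?G k"] by linarith
  ultimately show ?case
    by (simp add: degree_diff_le)
qed (use assms in auto)

lemma coeff_AB_poly_diagonal:
  assumes "degree G1 \<le> 1"
    and X_rec: "\<And>k. X (Suc (Suc k)) = - \<beta> * X (Suc k) - \<alpha>^2 * X k"
    and "g0 = X 0" and "coeff G1 1 = - X 1"
  shows "coeff (AB_poly a b \<alpha> \<beta> g0 G1 k) k = (-1)^k * X k"
proof (induction k rule: induct_nat_012)
  case (ge2 k)
  let ?G = "AB_poly a b \<alpha> \<beta> g0 G1"
  have "coeff (?G (Suc k)) (Suc (Suc k)) = 0" "coeff (?G k) (Suc k) = 0"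
    "coeff (?G k) (Suc (Suc k)) = 0"
    using degree_AB_poly[OF assms(1), of a b \<alpha> \<beta> g0 k]
      degree_AB_poly[OF assms(1), of a b \<alpha> \<beta> g0 "Suc k"] by (auto intro!: coeff_eq_0)
  then have "coeff (?G (Suc (Suc k))) (Suc (Suc k)) =
      \<beta> * coeff (?G (Suc k)) (Suc k) - \<alpha>^2 * coeff (?G k) k"
    by (simp add: power2_eq_square)
  also have "\<dots> = (-1)^(Suc (Suc k)) * X (Suc (Suc k))"
    using ge2.IH by (simp add: X_rec algebra_simps)
  finally show ?case .
qed (use assms in auto)

lemma homogenize_AB_poly:
  fixes a b \<alpha> \<beta> x y F g0 :: "'a::comm_ring_1" and T :: "nat \<Rightarrow> 'a"
  defines "A \<equiv> \<alpha>*x^2 + \<beta>*x*y + \<alpha>*y^2" and "B \<equiv> a*x^2 + b*x*y + a*y^2"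
    and "D \<equiv> \<beta>*a - \<alpha>*b"
  assumes "degree G1 \<le> 1"
    and T_rec: "\<And>k. T (Suc (Suc k)) = (x^2 + y^2) * T (Suc k) - (x*y)^2 * T k"
    and "T 0 = F * g0" and "D * T 1 = F * homogenize 1 G1 A B"
  shows "D^k * T k = F * homogenize k (AB_poly a b \<alpha> \<beta> g0 G1 k) A B"
proof (induction k rule: induct_nat_012)
  case (ge2 k)
  let ?G = "AB_poly a b \<alpha> \<beta> g0 G1"
  have deg: "degree (?G k) \<le> k" "degree (?G (Suc k)) \<le> Suc k"
    "degree ([:a, -\<alpha>:] * ?G k) \<le> Suc k"
    using degree_AB_poly[OF \<open>degree G1 \<le> 1\<close>] degree_linear_mult_le le_trans Suc_le_mono
    by blast+
  have sum_squares: "D * (x^2 + y^2) = -b * A + \<beta> * B"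
    and product: "D * (x*y) = a * A + -\<alpha> * B"
    by (simp_all add: A_def B_def D_def algebra_simps power2_eq_square)
  have "D^(Suc (Suc k)) * T (Suc (Suc k)) =
      (D * (x^2 + y^2)) * (D^(Suc k) * T (Suc k)) - (D * (x*y)) * ((D * (x*y)) * (D^k * T k))"
    by (simp add: T_rec algebra_simps power2_eq_square)
  also have "\<dots> = F * homogenize (Suc (Suc k)) (?G (Suc (Suc k))) A B"
    unfolding sum_squares product ge2.IH
    by (simp only: AB_poly.simps homogenize_diff homogenize_linear_mult deg) (simp add: algebra_simps)
  finally show ?case .
qed (use assms in \<open>simp_all add: homogenize_def\<close>)

lemma quadratic_forms_bezout:
  fixes a b \<alpha> \<beta> :: "'a::{idom,ring_char_0}"
  defines "D \<equiv> \<beta>*a - \<alpha>*b"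
  shows "([:-D*b:] - smult (a^2) [:\<alpha>, \<beta>, \<alpha>:] + smult (2*a*\<alpha>) [:a, b, a:]) * [:\<alpha>, \<beta>, \<alpha>:]
       + ([:D*\<beta>:] - smult (\<alpha>^2) [:a, b, a:]) * [:a, b, a:] = [:D^2:]"
  unfolding poly_eq_poly_eq_iff[symmetric]
  by (rule ext) (simp add: D_def algebra_simps power2_eq_square)

lemma const_eq_0_if_quadratic_dvd:
  fixes a b \<alpha> \<beta> c :: "'a::{idom,ring_char_0}"
  assumes D: "\<beta>*a - \<alpha>*b \<noteq> 0" and "\<alpha> \<noteq> 0"
    and dvd: "[:\<alpha>, \<beta>, \<alpha>:] dvd smult c ([:a, b, a:]^k)"
  shows "c = 0"
proof -
  define P Q U V where "P = [:\<alpha>, \<beta>, \<alpha>:]" and "Q = [:a, b, a:]"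
    and "U = [:-(\<beta>*a - \<alpha>*b)*b:] - smult (a^2) P + smult (2*a*\<alpha>) Q"
    and "V = [:(\<beta>*a - \<alpha>*b)*\<beta>:] - smult (\<alpha>^2) Q"
  have bezout: "U * P + V * Q = [:(\<beta>*a - \<alpha>*b)^2:]"
    unfolding U_def V_def P_def Q_def by (rule quadratic_forms_bezout)
  have "P dvd (U * P + V * Q)^k - (V * Q)^k"
    unfolding power_diff_sumr2 by simp
  moreover have "P dvd V^k * smult c (Q^k)"
    using dvd unfolding P_def Q_def by (rule dvd_mult)
  ultimately have "P dvd smult c ((U * P + V * Q)^k - (V * Q)^k) + smult c ((V * Q)^k)"
    by (simp add: dvd_smult power_mult_distrib)
  then have "P dvd [:c * ((\<beta>*a - \<alpha>*b)^2)^k:]"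
    by (simp add: bezout smult_diff_right poly_const_pow)
  moreover have "degree P = 2"
    using \<open>\<alpha> \<noteq> 0\<close> by (simp add: P_def)
  ultimately have "c * ((\<beta>*a - \<alpha>*b)^2)^k = 0"
    using dvd_imp_degree_le by fastforce
  then show ?thesis
    using D by simp
qed

lemma quadratic_forms_independent:
  fixes a b \<alpha> \<beta> :: "'a::{idom,ring_char_0}"
  assumes "\<beta>*a - \<alpha>*b \<noteq> 0" and "\<alpha> \<noteq> 0"
    and "(\<Sum>r\<le>m. smult (d r) ([:\<alpha>, \<beta>, \<alpha>:]^(m - r) * [:a, b, a:]^r)) = 0"
  shows "\<forall>r\<le>m. d r = 0"
  using assms(3)
proof (induction m arbitrary: d)
  case (Suc m)
  define P Q where "P = [:\<alpha>, \<beta>, \<alpha>:]" and "Q = [:a, b, a:]"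
  define S where "S = (\<Sum>r\<le>m. smult (d r) (P^(m - r) * Q^r))"
  have "(\<Sum>r\<le>m. smult (d r) (P^(Suc m - r) * Q^r)) = P * S"
    unfolding S_def sum_distrib_left by (rule sum.cong) (auto simp: Suc_diff_le algebra_simps)
  then have sum: "P * S + smult (d (Suc m)) (Q^Suc m) = 0"
    using Suc.prems by (simp add: P_def Q_def)
  then have "P dvd smult (d (Suc m)) (Q^Suc m)"
    by (metis add.commute add_eq_0_iff dvd_minus_iff dvd_triv_left)
  then have top: "d (Suc m) = 0"
    unfolding P_def Q_def by (rule const_eq_0_if_quadratic_dvd[OF assms(1,2)])
  have "P \<noteq> 0"
    using \<open>\<alpha> \<noteq> 0\<close> by (simp add: P_def)
  then have "S = 0"
    using sum top by simp
  then have "\<forall>r\<le>m. d r = 0"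
    using Suc.IH unfolding S_def P_def Q_def by blast
  then show ?case
    using top le_Suc_eq by auto
qed simp

lemma THE_coefficients_eq_coeff:
  fixes a b \<alpha> \<beta> :: "'a::{idom,ring_char_0}" and F L :: "'a \<Rightarrow> 'a \<Rightarrow> 'a"
  assumes "\<beta>*a - \<alpha>*b \<noteq> 0" and "\<alpha> \<noteq> 0"
    and "Fp \<noteq> 0" and F: "\<And>z. F z 1 = poly Fp z"
    and deg: "degree G \<le> m"
    and L: "\<And>x y. L x y = F x y * homogenize m G (\<alpha>*x^2 + \<beta>*x*y + \<alpha>*y^2) (a*x^2 + b*x*y + a*y^2)"
  shows "(THE c. (\<forall>r. m < r \<longrightarrow> c r = 0) \<and>
     (\<forall>x y. L x y = F x y * (\<Sum>r\<le>m. c r * (\<alpha>*x^2 + \<beta>*x*y + \<alpha>*y^2)^(m - r)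
                                        * (a*x^2 + b*x*y + a*y^2)^r))) = coeff G"
proof (rule the_equality)
  fix c
  assume c: "(\<forall>r. m < r \<longrightarrow> c r = 0) \<and>
     (\<forall>x y. L x y = F x y * (\<Sum>r\<le>m. c r * (\<alpha>*x^2 + \<beta>*x*y + \<alpha>*y^2)^(m - r)
                                        * (a*x^2 + b*x*y + a*y^2)^r))"
  define S where "S = (\<Sum>r\<le>m. smult (c r - coeff G r) ([:\<alpha>, \<beta>, \<alpha>:]^(m - r) * [:a, b, a:]^r))"
  have "poly (Fp * S) z = 0" for z
  proof -
    have "poly S z = (\<Sum>r\<le>m. c r * (\<alpha>*z^2 + \<beta>*z*1 + \<alpha>*1^2)^(m - r) * (a*z^2 + b*z*1 + a*1^2)^r)
        - (\<Sum>r\<le>m. coeff G r * (\<alpha>*z^2 + \<beta>*z*1 + \<alpha>*1^2)^(m - r) * (a*z^2 + b*z*1 + a*1^2)^r)"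
      unfolding S_def poly_sum sum_subtractf[symmetric]
      by (rule sum.cong) (simp_all add: poly_power algebra_simps power2_eq_square)
    then show ?thesis
      using c L[of z 1] by (simp add: F[symmetric] homogenize_def right_diff_distrib)
  qed
  then have "S = 0"
    using \<open>Fp \<noteq> 0\<close> poly_all_0_iff_0 by (metis mult_eq_0_iff)
  then have "\<forall>r\<le>m. c r = coeff G r"
    using quadratic_forms_independent[OF assms(1,2)] unfolding S_def by fastforce
  then show "c = coeff G"
    using c deg by (metis coeff_eq_0 ext le_less_trans not_le)
qed (use deg L in \<open>simp add: coeff_eq_0 homogenize_def\<close>)

lemma THE_coefficients_power_sum_last:
  fixes a b \<alpha> \<beta> s u v :: "'a::{idom,ring_char_0}" and F L :: "'a \<Rightarrow> 'a \<Rightarrow> 'a"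
    and Y :: "nat \<Rightarrow> 'a"
  assumes "\<beta>*a - \<alpha>*b \<noteq> 0" and "\<alpha> \<noteq> 0" and "Fp \<noteq> 0" and "\<And>z. F z 1 = poly Fp z"
    and L: "\<And>x y. L x y = (\<beta>*a - \<alpha>*b)^m * (x^(2*m + e) + s * y^(2*m + e))"
    and init0: "\<And>x y. x^e + s * y^e = F x y * Y e"
    and init1: "\<And>x y. (\<beta>*a - \<alpha>*b) * (x^(e + 2) + s * y^(e + 2)) =
                     F x y * (u * (\<alpha>*x^2 + \<beta>*x*y + \<alpha>*y^2) + v * (a*x^2 + b*x*y + a*y^2))"
    and Y_rec: "\<And>n. Y (n + 4) = - \<beta> * Y (n + 2) - \<alpha>^2 * Y n"
    and "v = - Y (e + 2)"
  shows "(THE c. (\<forall>r. m < r \<longrightarrow> c r = 0) \<and>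
     (\<forall>x y. L x y = F x y * (\<Sum>r\<le>m. c r * (\<alpha>*x^2 + \<beta>*x*y + \<alpha>*y^2)^(m - r)
                                        * (a*x^2 + b*x*y + a*y^2)^r))) m = (-1)^m * Y (2*m + e)"
    (is "(THE c. ?P c) m = _")
proof -
  let ?G = "AB_poly a b \<alpha> \<beta> (Y e) [:u, v:] m"
  have "(THE c. ?P c) = coeff ?G"
  proof (rule THE_coefficients_eq_coeff[where F=F, OF assms(1-4)])
    show "degree ?G \<le> m"
      by (rule degree_AB_poly) simp
    fix x y :: 'a
    have "(\<beta>*a - \<alpha>*b)^m * (x^(2*m + e) + s * y^(2*m + e)) =
        F x y * homogenize m ?G (\<alpha>*x^2 + \<beta>*x*y + \<alpha>*y^2) (a*x^2 + b*x*y + a*y^2)"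
    proof (rule homogenize_AB_poly[where T="\<lambda>k. x^(2*k + e) + s * y^(2*k + e)"])
      show "x^(2 * Suc (Suc k) + e) + s * y^(2 * Suc (Suc k) + e) =
          (x^2 + y^2) * (x^(2 * Suc k + e) + s * y^(2 * Suc k + e)) - (x*y)^2 * (x^(2*k + e) + s * y^(2*k + e))"
        for k
        by (simp add: power_add power_mult_distrib algebra_simps power2_eq_square)
    qed (use init0 init1 in \<open>simp_all add: homogenize_def add.commute\<close>)
    then show "L x y = F x y * homogenize m ?G (\<alpha>*x^2 + \<beta>*x*y + \<alpha>*y^2) (a*x^2 + b*x*y + a*y^2)"
      by (simp only: L)
  qed
  moreover have "coeff ?G m = (-1)^m * Y (2*m + e)"
  proof (rule coeff_AB_poly_diagonal[where X="\<lambda>k. Y (2*k + e)"])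
    fix k
    have "2 * Suc (Suc k) + e = (2*k + e) + 4" and "2 * Suc k + e = (2*k + e) + 2"
      by simp_all
    then show "Y (2 * Suc (Suc k) + e) = - \<beta> * Y (2 * Suc k + e) - \<alpha>^2 * Y (2*k + e)"
      by (simp only: Y_rec)
  qed (use \<open>v = - Y (e + 2)\<close> in \<open>simp_all add: add.commute\<close>)
  ultimately show ?thesis
    by simp
qed

lemma delta_0: "delta 0 = 0"
  by (simp add: delta_def)

lemma delta_Suc: "delta (Suc n) = 1 - delta n"
  by (simp add: delta_def)

lemma Psi_add_4: "Psi a b (n + 4) = - b * Psi a b (n + 2) - a^2 * Psi a b n"
proof -
  have "Psi a b (Suc (Suc (Suc (Suc n)))) = - b * Psi a b (Suc (Suc n)) - a^2 * Psi a b n"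
    by (cases "even n") (simp_all add: delta_def algebra_simps power2_eq_square)
  then show ?thesis
    by (simp add: eval_nat_numeral)
qed

lemma Phi_add_4: "Phi a b (n + 4) = - b * Phi a b (n + 2) - a^2 * Phi a b n"
proof -
  have "Phi a b (Suc (Suc (Suc (Suc n)))) = - b * Phi a b (Suc (Suc n)) - a^2 * Phi a b n"
    by (cases "even n") (simp_all add: delta_def algebra_simps power2_eq_square)
  then show ?thesis
    by (simp add: eval_nat_numeral)
qed

lemma Psi_coef_last:
  fixes a b \<alpha> \<beta> :: "'a::{idom,ring_char_0}"
  assumes "\<beta>*a - \<alpha>*b \<noteq> 0" and "\<alpha> \<noteq> 0"
  shows "Psi_coef a b \<alpha> \<beta> n (n div 2) = (-1)^(n div 2) * Psi \<alpha> \<beta> n"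
proof (cases "even n")
  case True
  \<comment> \<open>The summand \<open>+ 0\<close> keeps the exponent in the shape \<open>2*m + e\<close> expected by
    \<open>THE_coefficients_power_sum_last\<close>.\<close>
  then obtain m where n: "n = 2*m + 0"
    by auto
  have "(2*m + 0) div 2 = m" and "delta (2*m + 0) = 0"
    by (simp_all add: delta_def)
  then have "Psi_coef a b \<alpha> \<beta> (2*m + 0) m = (-1)^m * Psi \<alpha> \<beta> (2*m + 0)"
    unfolding Psi_coef_def
    by (simp only:)
      (rule THE_coefficients_power_sum_last[OF assms _ _ _ _ _ Psi_add_4,
          where Fp=1 and s=1 and u="-b" and v=\<beta>],
       simp_all add: delta_0 delta_Suc algebra_simps power2_eq_square power3_eq_cube power4_eq_xxxx)
  then show ?thesis
    using n by simp
next
  case False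
  then obtain m where n: "n = 2*m + 1"
    using oddE by blast
  have "(2*m + 1) div 2 = m" and "delta (2*m + 1) = 1"
    by (simp_all add: delta_def)
  then have "Psi_coef a b \<alpha> \<beta> (2*m + 1) m = (-1)^m * Psi \<alpha> \<beta> (2*m + 1)"
    unfolding Psi_coef_def
    by (simp only:)
      (rule THE_coefficients_power_sum_last[OF assms _ _ _ _ _ Psi_add_4,
          where Fp="[:1, 1:]" and s=1 and u="-a-b" and v="\<alpha>+\<beta>"],
       simp_all add: delta_0 delta_Suc algebra_simps power2_eq_square power3_eq_cube power4_eq_xxxx)
  then show ?thesis
    using n by simp
qed

lemma Phi_coef_last:
  fixes a b \<alpha> \<beta> :: "'a::{idom,ring_char_0}"
  assumes "\<beta>*a - \<alpha>*b \<noteq> 0" and "\<alpha> \<noteq> 0" and "n \<ge> 1"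
  shows "Phi_coef a b \<alpha> \<beta> n ((n - 1) div 2) = (-1)^((n - 1) div 2) * Phi \<alpha> \<beta> n"
proof (cases "odd n")
  case True
  then obtain m where n: "n = 2*m + 1"
    using oddE by blast
  have "(2*m + 1 - 1) div 2 = m" and "delta (2*m + 1 - 1) = 0"
    by (simp_all add: delta_def)
  then have "Phi_coef a b \<alpha> \<beta> (2*m + 1) m = (-1)^m * Phi \<alpha> \<beta> (2*m + 1)"
    unfolding Phi_coef_def
    by (simp only:)
      (rule THE_coefficients_power_sum_last[OF assms(1,2) _ _ _ _ _ Phi_add_4,
          where Fp="[:-1, 1:]" and s="-1" and u="a-b" and v="\<beta>-\<alpha>"],
       simp_all add: delta_0 delta_Suc algebra_simps power2_eq_square power3_eq_cube power4_eq_xxxx)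
  then show ?thesis
    using n by simp
next
  case False
  define m where "m = n div 2 - 1"
  have n: "n = 2*m + 2"
    using False \<open>n \<ge> 1\<close> unfolding m_def by presburger
  have "(2*m + 2 - 1) div 2 = m" and "delta (2*m + 2 - 1) = 1"
    by (simp_all add: delta_def)
  then have "Phi_coef a b \<alpha> \<beta> (2*m + 2) m = (-1)^m * Phi \<alpha> \<beta> (2*m + 2)"
    unfolding Phi_coef_def
    by (simp only:)
      (rule THE_coefficients_power_sum_last[OF assms(1,2) _ _ _ _ _ Phi_add_4,
          where Fp="[:-1, 1:] * [:1, 1:]" and s="-1" and u="-b" and v=\<beta>],
       simp_all add: eval_nat_numeral delta_0 delta_Suc algebra_simps power2_eq_square
         power3_eq_cube power4_eq_xxxx)
  then show ?thesis
    using n by simp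
qed

lemma indeterminates_nondegenerate: "Xbeta * Xa - Xalpha * Xb \<noteq> 0" "Xalpha \<noteq> 0"
  unfolding Xa_def Xb_def Xalpha_def Xbeta_def by simp_all

theorem theorem6p1:
  fixes n :: nat
  assumes "n \<ge> 1"
  shows "Psi_coef Xa Xb Xalpha Xbeta n (n div 2) = (-1) ^ (n div 2) * Psi Xalpha Xbeta n
       \<and> Phi_coef Xa Xb Xalpha Xbeta n ((n - 1) div 2) = (-1) ^ ((n - 1) div 2) * Phi Xalpha Xbeta n"
  using Psi_coef_last[OF indeterminates_nondegenerate]
    Phi_coef_last[OF indeterminates_nondegenerate assms] by blast

end
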